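(* Let $p\ge q>0$ with $pq>1$, and let $(u,v)$ be a positive bounded classical solution of $-\Delta u=v^p$, $-\Delta v=u^q$ in $\mathbb{R}^n$. Then $$v^{p+1}(x)\le\frac{p+1}{q+1}\,u^{q+1}(x)\qquad\text{for all }x\in\mathbb{R}^n.$$ *)

theory Defs
  imports "HOL-Analysis.Analysis"
begin

definition partial :: "'n::finite \<Rightarrow> (real^'n \<Rightarrow> real) \<Rightarrow> real^'n \<Rightarrow> real" where
  "partial i f x = deriv (\<lambda>t. f (x + t *\<^sub>R axis i 1)) 0"

definition partial_differentiable :: "'n::finite \<Rightarrow> (real^'n \<Rightarrow> real) \<Rightarrow> bool" where
  "partial_differentiable i f \<longleftrightarrow> (\<forall>x. (\<lambda>t. f (x + t *\<^sub>R axis i 1)) differentiable (at 0))"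

definition C2 :: "(real^'n::finite \<Rightarrow> real) \<Rightarrow> bool" where
  "C2 f \<longleftrightarrow> continuous_on UNIV f \<and>
     (\<forall>i. partial_differentiable i f \<and> continuous_on UNIV (partial i f) \<and>
        (\<forall>j. partial_differentiable j (partial i f) \<and> continuous_on UNIV (partial j (partial i f))))"

definition laplacian :: "(real^'n::finite \<Rightarrow> real) \<Rightarrow> real^'n \<Rightarrow> real" where
  "laplacian f x = (\<Sum>i\<in>UNIV. partial i (partial i f) x)"

end

theory Submission
  imports Defs
begin

text \<open>
  Compare \<open>v\<close> with \<open>\<phi>(u)\<close>, where \<open>\<phi>(s) = l s^\<sigma>\<close>, \<open>\<sigma> = (q+1)/(p+1) \<le> 1\<close> and
  \<open>l^(p+1) = (p+1)/(q+1)\<close>, so that \<open>\<phi>\<close> is concave and \<open>\<phi>'(s) \<phi>(s)^p = s^q\<close>.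
  If \<open>w = v - \<phi>(u)\<close> is positive at \<open>x\<^sub>0\<close>, then, \<open>v\<close> being bounded, \<open>w - \<delta> |x - x\<^sub>0|\<^sup>2\<close>
  attains its maximum at a point where \<open>w \<ge> w(x\<^sub>0)\<close>. There the equations and the concavity
  of \<open>\<phi>\<close> give \<open>\<phi>'(u) (v^p - \<phi>(u)^p) \<le> 2n\<delta>\<close>, while, since \<open>p > 1\<close> and \<open>u \<le> sup u\<close>, the
  left side is at least \<open>\<phi>'(sup u) w(x\<^sub>0)^p\<close>; this is impossible for small \<open>\<delta>\<close>.
  Hence \<open>v \<le> \<phi>(u)\<close>, and raising this to the power \<open>p + 1\<close> gives the claim.
\<close>

lemma partial_has_real_derivative:
  assumes "partial_differentiable i f"
  shows "((\<lambda>t. f (x + t *\<^sub>R axis i 1)) has_real_derivative partial i f (x + s *\<^sub>R axis i 1)) (at s)"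
proof -
  let ?y = "x + s *\<^sub>R axis i 1"
  have "(\<lambda>t. f (?y + t *\<^sub>R axis i 1)) differentiable (at 0)"
    using assms unfolding partial_differentiable_def by blast
  then have "((\<lambda>t. f (?y + t *\<^sub>R axis i 1)) has_real_derivative partial i f ?y) (at 0)"
    unfolding partial_def using DERIV_deriv_iff_real_differentiable by blast
  moreover have "(\<lambda>t. f (?y + t *\<^sub>R axis i 1)) = (\<lambda>t. f (x + (t + s) *\<^sub>R axis i 1))"
    by (simp add: scaleR_add_left algebra_simps)
  ultimately show ?thesis
    using DERIV_shift[of "\<lambda>t. f (x + t *\<^sub>R axis i 1)" "partial i f ?y" 0 s] by simp
qed

lemma second_derivative_nonpos_at_max:
  fixes g g' :: "real \<Rightarrow> real"
  assumes deriv: "\<And>t. (g has_real_derivative g' t) (at t)"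
    and deriv2: "(g' has_real_derivative D) (at 0)"
    and max: "\<And>t. g t \<le> g 0"
  shows "D \<le> 0"
proof (rule ccontr)
  assume "\<not> D \<le> 0"
  then have "D > 0" by simp
  have "g' 0 = 0"
    using DERIV_local_max[OF deriv[of 0], of 1] max by auto
  obtain d where d: "d > 0" "\<And>h. 0 < h \<Longrightarrow> h < d \<Longrightarrow> g' 0 < g' (0 + h)"
    using DERIV_pos_inc_right[OF deriv2 \<open>D > 0\<close>] by blast
  obtain z where z: "0 < z" "z < d/2" "g (d/2) - g 0 = (d/2 - 0) * g' z"
    using MVT2[of 0 "d/2" g g'] d(1) deriv by auto
  have "g' z > 0" using d(2)[of z] z \<open>g' 0 = 0\<close> by simp
  then have "(d/2 - 0) * g' z > 0" using d(1) by simp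
  then have "g (d/2) > g 0" using z(3) by linarith
  then show False using max[of "d/2"] by simp
qed

lemma powr_add_le_add_powr:
  fixes a b p :: real
  assumes "a \<ge> 0" "b \<ge> 0" "p \<ge> 1"
  shows "a powr p + b powr p \<le> (a + b) powr p"
proof (cases "a + b = 0")
  case True
  then have "a = 0" "b = 0" using assms by auto
  then show ?thesis by simp
next
  case False
  define s where "s = a + b"
  have s: "s > 0" using False assms s_def by simp
  have "(a/s) powr p + (b/s) powr p \<le> a/s + b/s"
    using powr_mono'[of 1 p "a/s"] powr_mono'[of 1 p "b/s"] assms s s_def
    by (simp add: add_mono)
  also have "\<dots> = 1" using s s_def by (simp add: add_divide_distrib[symmetric])
  finally have "s powr p * ((a/s) powr p + (b/s) powr p) \<le> s powr p"
    by (simp add: mult_left_le)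
  moreover have "s powr p * ((a/s) powr p + (b/s) powr p) = a powr p + b powr p"
    using s assms by (simp add: distrib_left powr_divide)
  ultimately show ?thesis using s_def by simp
qed

lemma penalized_maximum_exists:
  fixes w :: "'a::euclidean_space \<Rightarrow> real"
  assumes "continuous_on UNIV w" "\<And>x. w x \<le> m" "\<delta> > 0"
  obtains xs where "\<And>y. w y - \<delta> * (norm (y - x0))\<^sup>2 \<le> w xs - \<delta> * (norm (xs - x0))\<^sup>2"
proof -
  define z where "z y = w y - \<delta> * (norm (y - x0))\<^sup>2" for y
  define r where "r = sqrt ((m - w x0) / \<delta>)"
  have "m - w x0 \<ge> 0" using assms(2)[of x0] by simp
  then have r: "r \<ge> 0" "r\<^sup>2 = (m - w x0) / \<delta>"
    unfolding r_def using assms(3) by simp_all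
  have "continuous_on UNIV z"
    unfolding z_def using assms(1) by (intro continuous_intros)
  then have "continuous_on (cball x0 r) z"
    by (rule continuous_on_subset) simp
  then obtain xs where xs: "xs \<in> cball x0 r" "\<And>y. y \<in> cball x0 r \<Longrightarrow> z y \<le> z xs"
    using continuous_attains_sup[OF compact_cball] r(1) by (metis centre_in_cball empty_iff)
  have "z y \<le> z xs" for y
  proof (cases "y \<in> cball x0 r")
    case False
    then have "(norm (y - x0))\<^sup>2 > r\<^sup>2"
      using r(1) by (simp add: dist_norm norm_minus_commute power_strict_mono)
    then have "\<delta> * (norm (y - x0))\<^sup>2 > m - w x0"
      using r(2) assms(3) by (simp add: field_simps)
    then have "z y < z x0" unfolding z_def using assms(2)[of y] by simp
    also have "z x0 \<le> z xs" using xs(2) r(1) by simp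
    finally show ?thesis by simp
  qed (use xs in blast)
  then show ?thesis using that unfolding z_def by blast
qed

lemma penalized_comparison_second_derivative:
  fixes U V U' V' :: "real \<Rightarrow> real"
  assumes dU: "\<And>t. (U has_real_derivative U' t) (at t)"
    and dV: "\<And>t. (V has_real_derivative V' t) (at t)"
    and dU': "(U' has_real_derivative U'') (at 0)"
    and dV': "(V' has_real_derivative V'') (at 0)"
    and U_pos: "\<And>t. U t > 0"
    and max: "\<And>t. V t - l * U t powr \<sigma> - \<delta> * (a + b * t + t\<^sup>2) \<le> V 0 - l * U 0 powr \<sigma> - \<delta> * a"
  shows "V'' - l * \<sigma> * ((\<sigma> - 1) * U 0 powr (\<sigma> - 2) * (U' 0)\<^sup>2 + U 0 powr (\<sigma> - 1) * U'')
           - 2 * \<delta> \<le> 0"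
proof -
  define g where "g t = V t - l * U t powr \<sigma> - \<delta> * (a + b * t + t\<^sup>2)" for t
  define g' where "g' t = V' t - l * (\<sigma> * (U t powr (\<sigma> - 1) * U' t)) - \<delta> * (b + 2 * t)" for t
  have "(g has_real_derivative g' t) (at t)" for t
  proof -
    have powr: "((\<lambda>t. U t powr \<sigma>) has_real_derivative \<sigma> * (U t powr (\<sigma> - 1) * U' t)) (at t)"
      using DERIV_fun_powr[OF dU U_pos] by (simp add: mult.assoc)
    have penalty: "((\<lambda>t. \<delta> * (a + b * t + t\<^sup>2)) has_real_derivative \<delta> * (b + 2 * t)) (at t)"
      by (auto intro!: derivative_eq_intros)
    from DERIV_diff[OF DERIV_diff[OF dV DERIV_cmult[OF powr, of l]] penalty]
    show ?thesis unfolding g_def g'_def .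
  qed
  moreover have "(g' has_real_derivative
      V'' - l * (\<sigma> * ((\<sigma> - 1) * U 0 powr (\<sigma> - 2) * U' 0 * U' 0 + U 0 powr (\<sigma> - 1) * U''))
      - \<delta> * 2) (at 0)"
  proof -
    have powr: "((\<lambda>t. U t powr (\<sigma> - 1)) has_real_derivative (\<sigma> - 1) * U 0 powr (\<sigma> - 2) * U' 0) (at 0)"
      using DERIV_fun_powr[OF dU U_pos, of "\<sigma> - 1" 0] by (simp add: diff_diff_eq)
    have penalty: "((\<lambda>t. \<delta> * (b + 2 * t)) has_real_derivative \<delta> * 2) (at 0)"
      by (auto intro!: derivative_eq_intros)
    from DERIV_diff[OF DERIV_diff[OF dV' DERIV_cmult[OF DERIV_cmult[OF DERIV_mult[OF powr dU'], of \<sigma>], of l]] penalty]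
    show ?thesis unfolding g'_def by (simp add: algebra_simps)
  qed
  moreover have "g t \<le> g 0" for t
    using max unfolding g_def by simp
  ultimately have "V'' - l * (\<sigma> * ((\<sigma> - 1) * U 0 powr (\<sigma> - 2) * U' 0 * U' 0
      + U 0 powr (\<sigma> - 1) * U'')) - \<delta> * 2 \<le> 0"
    by (rule second_derivative_nonpos_at_max)
  then show ?thesis by (simp add: power2_eq_square mult_ac)
qed

lemma partial2_comparison_at_max:
  fixes u v :: "real^'n \<Rightarrow> real"
  assumes "C2 u" "C2 v" "\<And>x. u x > 0"
    and max: "\<And>x. v x - l * u x powr \<sigma> - \<delta> * (norm (x - x0))\<^sup>2
                   \<le> v xs - l * u xs powr \<sigma> - \<delta> * (norm (xs - x0))\<^sup>2"
  shows "partial i (partial i v) xs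
           - l * \<sigma> * ((\<sigma> - 1) * u xs powr (\<sigma> - 2) * (partial i u xs)\<^sup>2
                       + u xs powr (\<sigma> - 1) * partial i (partial i u) xs)
           - 2 * \<delta> \<le> 0"
proof -
  define e :: "real^'n" where "e = axis i 1"
  have "partial_differentiable i u" "partial_differentiable i (partial i u)"
    "partial_differentiable i v" "partial_differentiable i (partial i v)"
    using assms(1,2) unfolding C2_def by blast+
  note line_derivative = this[THEN partial_has_real_derivative, folded e_def]
  have "(norm (xs + t *\<^sub>R e - x0))\<^sup>2 = (norm (xs - x0))\<^sup>2 + 2 * ((xs - x0) \<bullet> e) * t + t\<^sup>2" for t
    unfolding e_def power2_norm_eq_inner
    by (simp add: inner_add_left inner_add_right inner_diff_left inner_diff_right inner_commute
        power2_eq_square algebra_simps)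
  then have "v (xs + t *\<^sub>R e) - l * u (xs + t *\<^sub>R e) powr \<sigma>
               - \<delta> * ((norm (xs - x0))\<^sup>2 + 2 * ((xs - x0) \<bullet> e) * t + t\<^sup>2)
             \<le> v (xs + 0 *\<^sub>R e) - l * u (xs + 0 *\<^sub>R e) powr \<sigma> - \<delta> * (norm (xs - x0))\<^sup>2" for t
    using max[of "xs + t *\<^sub>R e"] by simp
  from penalized_comparison_second_derivative[OF line_derivative(1,3), OF line_derivative(2,4)[of xs 0], OF assms(3) this]
  show ?thesis by simp
qed

lemma laplacian_comparison_at_max:
  fixes u v :: "real^'n \<Rightarrow> real"
  assumes "C2 u" "C2 v" "\<And>x. u x > 0" "l \<ge> 0" "0 \<le> \<sigma>" "\<sigma> \<le> 1"
    and max: "\<And>x. v x - l * u x powr \<sigma> - \<delta> * (norm (x - x0))\<^sup>2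
                   \<le> v xs - l * u xs powr \<sigma> - \<delta> * (norm (xs - x0))\<^sup>2"
  shows "laplacian v xs - l * \<sigma> * u xs powr (\<sigma> - 1) * laplacian u xs \<le> 2 * \<delta> * CARD('n)"
proof -
  let ?gradient_term = "l * \<sigma> * (\<sigma> - 1) * u xs powr (\<sigma> - 2) * (\<Sum>i\<in>UNIV. (partial i u xs)\<^sup>2)"
  have "?gradient_term \<le> 0"
    using assms(4-6) by (intro mult_nonpos_nonneg mult_nonneg_nonpos sum_nonneg) auto
  have "(\<Sum>i\<in>UNIV. partial i (partial i v) xs
           - l * \<sigma> * ((\<sigma> - 1) * u xs powr (\<sigma> - 2) * (partial i u xs)\<^sup>2
                       + u xs powr (\<sigma> - 1) * partial i (partial i u) xs)
           - 2 * \<delta>) \<le> 0"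
    using partial2_comparison_at_max[OF assms(1-3) max] by (intro sum_nonpos)
  also have "(\<Sum>i\<in>UNIV. partial i (partial i v) xs
           - l * \<sigma> * ((\<sigma> - 1) * u xs powr (\<sigma> - 2) * (partial i u xs)\<^sup>2
                       + u xs powr (\<sigma> - 1) * partial i (partial i u) xs)
           - 2 * \<delta>)
      = laplacian v xs - ?gradient_term - l * \<sigma> * u xs powr (\<sigma> - 1) * laplacian u xs
        - 2 * \<delta> * CARD('n)"
    unfolding laplacian_def
    by (simp add: sum_subtractf sum.distrib sum_distrib_left algebra_simps)
  finally show ?thesis using \<open>?gradient_term \<le> 0\<close> by linarith
qed

lemma le_comparison_function:
  fixes u v :: "real^'n \<Rightarrow> real"
  assumes "p \<ge> 1" "0 < \<sigma>" "\<sigma> \<le> 1" "l > 0"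
    and scaling: "\<And>s. s > 0 \<Longrightarrow> l * \<sigma> * s powr (\<sigma> - 1) * (l * s powr \<sigma>) powr p = s powr q"
    and u_pos: "\<And>x. u x > 0"
    and "bounded (range u)" "bounded (range v)" "C2 u" "C2 v"
    and u_eq: "\<And>x. - laplacian u x = v x powr p"
    and v_eq: "\<And>x. - laplacian v x = u x powr q"
  shows "v x \<le> l * u x powr \<sigma>"
proof (rule ccontr)
  define w where "w y = v y - l * u y powr \<sigma>" for y
  assume "\<not> v x \<le> l * u x powr \<sigma>"
  then have "w x > 0" unfolding w_def by simp
  obtain M where M: "M > 0" "\<And>y. u y \<le> M"
    using \<open>bounded (range u)\<close> unfolding bounded_pos by (metis abs_le_D1 rangeI real_norm_def)
  obtain K where K: "\<And>y. v y \<le> K"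
    using \<open>bounded (range v)\<close> unfolding bounded_pos by (metis abs_le_D1 rangeI real_norm_def)
  have "w y \<le> K" for y
  proof -
    have "l * u y powr \<sigma> \<ge> 0" using \<open>l > 0\<close> by simp
    then show ?thesis using K[of y] unfolding w_def by linarith
  qed
  \<comment> \<open>a lower bound for \<open>\<phi>'(u) (v^p - \<phi>(u)^p)\<close> wherever \<open>w \<ge> w x\<close>\<close>
  define c where "c = l * \<sigma> * M powr (\<sigma> - 1) * w x powr p"
  define \<delta> where "\<delta> = c / (4 * CARD('n))"
  have "c > 0" "\<delta> > 0"
    unfolding \<delta>_def c_def using \<open>l > 0\<close> \<open>\<sigma> > 0\<close> M(1) \<open>w x > 0\<close> by simp_all
  have "continuous_on UNIV w"
    using \<open>C2 u\<close> \<open>C2 v\<close> u_pos unfolding w_def C2_def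
    by (auto intro!: continuous_intros simp: less_imp_neq[symmetric])
  then obtain xs where max: "\<And>y. w y - \<delta> * (norm (y - x))\<^sup>2 \<le> w xs - \<delta> * (norm (xs - x))\<^sup>2"
    using penalized_maximum_exists \<open>\<And>y. w y \<le> K\<close> \<open>\<delta> > 0\<close> by metis
  have "\<delta> * (norm (xs - x))\<^sup>2 \<ge> 0"
    using \<open>\<delta> > 0\<close> by simp
  then have "w xs \<ge> w x"
    using max[of x] by simp
  have "laplacian u xs = - (v xs powr p)" "laplacian v xs = - (u xs powr q)"
    using u_eq[of xs] v_eq[of xs] by simp_all
  then have "l * \<sigma> * u xs powr (\<sigma> - 1) * v xs powr p - u xs powr q \<le> 2 * \<delta> * CARD('n)"
    using laplacian_comparison_at_max[OF \<open>C2 u\<close> \<open>C2 v\<close> u_pos _ _ \<open>\<sigma> \<le> 1\<close> max[unfolded w_def]]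
      \<open>l > 0\<close> \<open>\<sigma> > 0\<close> by simp
  also have "\<dots> < c" using \<open>c > 0\<close> unfolding \<delta>_def by simp
  also have "c \<le> l * \<sigma> * u xs powr (\<sigma> - 1) * (v xs powr p - (l * u xs powr \<sigma>) powr p)"
  proof -
    have "l * u xs powr \<sigma> \<ge> 0" using \<open>l > 0\<close> by simp
    then have "v xs powr p \<ge> (l * u xs powr \<sigma> + w x) powr p"
      using \<open>w xs \<ge> w x\<close> \<open>w x > 0\<close> \<open>p \<ge> 1\<close> unfolding w_def by (intro powr_mono2) auto
    moreover have "(l * u xs powr \<sigma> + w x) powr p \<ge> (l * u xs powr \<sigma>) powr p + w x powr p"
      using powr_add_le_add_powr \<open>l > 0\<close> \<open>w x > 0\<close> \<open>p \<ge> 1\<close> by simp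
    moreover have "u xs powr (\<sigma> - 1) \<ge> M powr (\<sigma> - 1)"
      using powr_mono2'[of "\<sigma> - 1" "u xs" M] \<open>\<sigma> \<le> 1\<close> u_pos M(2) by simp
    ultimately show ?thesis
      unfolding c_def using \<open>l > 0\<close> \<open>\<sigma> > 0\<close> by (intro mult_mono) auto
  qed
  also have "\<dots> = l * \<sigma> * u xs powr (\<sigma> - 1) * v xs powr p - u xs powr q"
    using scaling[OF u_pos] by (simp add: right_diff_distrib)
  finally show False by simp
qed

lemma comparison_function_identity:
  fixes p q s :: real
  assumes "p > 0" "q > 0" "s > 0"
  defines "\<sigma> \<equiv> (q + 1) / (p + 1)" and "l \<equiv> ((p + 1) / (q + 1)) powr (1 / (p + 1))"
  shows "l * \<sigma> * s powr (\<sigma> - 1) * (l * s powr \<sigma>) powr p = s powr q"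
proof -
  have "l * \<sigma> * l powr p = \<sigma> * l powr (p + 1)"
    using assms(1,2) unfolding l_def by (simp add: powr_add)
  also have "\<dots> = 1"
    using assms(1,2) unfolding l_def \<sigma>_def by (simp add: powr_powr)
  finally have "l * \<sigma> * s powr (\<sigma> - 1) * (l * s powr \<sigma>) powr p = s powr (\<sigma> - 1 + \<sigma> * p)"
    using assms(1-3) unfolding l_def by (simp add: powr_mult powr_powr powr_add)
  also have "\<sigma> - 1 + \<sigma> * p = \<sigma> * (p + 1) - 1"
    by (simp add: algebra_simps)
  also have "\<dots> = q"
    using assms(1) unfolding \<sigma>_def by simp
  finally show ?thesis .
qed

theorem lemma2p5:
  fixes u v :: "real^'n \<Rightarrow> real" and p q :: real
  assumes "p \<ge> q" and "q > 0" and "p * q > 1"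
    and "\<And>x. u x > 0" and "\<And>x. v x > 0"
    and "bounded (range u)" and "bounded (range v)"
    and "C2 u" and "C2 v"
    and "\<And>x. - laplacian u x = v x powr p"
    and "\<And>x. - laplacian v x = u x powr q"
  shows "\<forall>x. v x powr (p + 1) \<le> (p + 1) / (q + 1) * u x powr (q + 1)"
proof
  fix x
  have "p > 1"
    using assms(1-3) mult_mono[of p 1 q 1] by (cases "p \<le> 1") auto
  define \<sigma> where "\<sigma> = (q + 1) / (p + 1)"
  define l where "l = ((p + 1) / (q + 1)) powr (1 / (p + 1))"
  have "v x \<le> l * u x powr \<sigma>"
  proof (rule le_comparison_function)
    show "l * \<sigma> * s powr (\<sigma> - 1) * (l * s powr \<sigma>) powr p = s powr q" if "s > 0" for s
      using comparison_function_identity[OF _ assms(2) that] \<open>p > 1\<close> unfolding \<sigma>_def l_def by simp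
  qed (use assms \<open>p > 1\<close> in \<open>auto simp: \<sigma>_def l_def\<close>)
  then have "v x powr (p + 1) \<le> (l * u x powr \<sigma>) powr (p + 1)"
    using \<open>p > 1\<close> assms(5) by (intro powr_mono2) (auto simp: less_imp_le)
  also have "\<dots> = (p + 1) / (q + 1) * u x powr (q + 1)"
    using \<open>p > 1\<close> assms(2,4) unfolding l_def \<sigma>_def by (simp add: powr_mult powr_powr)
  finally show "v x powr (p + 1) \<le> (p + 1) / (q + 1) * u x powr (q + 1)" .
qed

end
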